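(* Let $X\subseteq\mathbb{R}^k$ be a set of feasible alternatives, $\mathbf{f}=(f_1,f_2):X\to\mathbb{R}^2$ a vector criterion and $Y=\mathbf{f}(X)$. Consider three decision makers whose preference relations $\succ_1,\succ_2,\succ_3$ on $\mathbb{R}^2$ are cone relations with cones $K_1,K_2,K_3$, each $K_l$ being a convex pointed cone with $\mathbb{R}^2_+\subseteq K_l$ and $\mathbf{0}_2\notin K_l$. Suppose that vectors $$\mathbf{y}^{(1)}=\begin{pmatrix} w_1^{(1)}\\ -w_2^{(1)}\end{pmatrix},\quad \mathbf{y}^{(2)}=\begin{pmatrix} w_1^{(2)}\\ -w_2^{(2)}\end{pmatrix},\quad \mathbf{y}^{(3)}=\begin{pmatrix} -w_1^{(3)}\\ w_2^{(3)}\end{pmatrix},$$ with all $w_i^{(l)}>0$, are given such that $\mathbf{y}^{(1)}\succ_1\mathbf{0}_2$, $\mathbf{y}^{(2)}\succ_2\mathbf{0}_2$, $\mathbf{y}^{(3)}\succ_3\mathbf{0}_2$, and $\mathbf{y}^{(1)}$ and $\mathbf{y}^{(2)}$ are not codirectional. Put $W(1,2)=w_1^{(1)}w_2^{(2)}-w_2^{(1)}w_1^{(2)}$. Define the vector criterion $\mathbf{g}=(g_1,g_2)$ on $X$ by $g_1=f_1$ and $g_2=w_2^{(1)}f_1+w_1^{(1)}f_2$ if $W(1,2)>0$, respectively $g_2=w_2^{(2)}f_1+w_1^{(2)}f_2$ if $W(1,2)<0$. Then $\hat P_{\mathbf{g}}(Y)\subseteq P(Y)$, where $\hat P_{\mathb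f{g}}(Y)=\mathbf{f}(P_{\mathbf{g}}(X))$.
   Context: For $\mathbf{a},\mathbf{b}\in\mathbb{R}^m$, $\mathbf{a}\geq\mathbf{b}$ means $a_i\ge b_i$ for all $i$ and $\mathbf{a}\neq\mathbf{b}$; $\mathbb{R}^m_+=\{\mathbf{y}\in\mathbb{R}^m:\mathbf{y}\geq\mathbf{0}_m\}$. A binary relation $\mathfrak{R}$ on $\mathbb{R}^m$ is a cone relation with cone $K$ if $\mathbf{y}^{(1)}\mathfrak{R}\,\mathbf{y}^{(2)}\iff \mathbf{y}^{(1)}-\mathbf{y}^{(2)}\in K$. The Pareto set is $P(Y)=\{\mathbf{y}^*\in Y:\ \nexists\,\mathbf{y}\in Y,\ \mathbf{y}\geq\mathbf{y}^*\}$, and for a vector criterion $\mathbf{g}$ on $X$, $P_{\mathbf{g}}(X)=\{\mathbf{x}^*\in X:\ \nexists\,\mathbf{x}\in X,\ \mathbf{g}(\mathbf{x})\geq\mathbf{g}(\mathbf{x}^* )\}$. Two vectors are codirectional if one is a positive multiple of the other. *)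

theory Defs
  imports "HOL-Analysis.Analysis"
begin

definition vgeq :: "real^'m \<Rightarrow> real^'m \<Rightarrow> bool" where
  "vgeq a b \<longleftrightarrow> (\<forall>i. a $ i \<ge> b $ i) \<and> a \<noteq> b"

definition nonneg_orthant :: "(real^'m) set" where
  "nonneg_orthant = {y. vgeq y 0}"

definition cone_rel :: "(real^'m) set \<Rightarrow> real^'m \<Rightarrow> real^'m \<Rightarrow> bool" where
  "cone_rel K y1 y2 \<longleftrightarrow> y1 - y2 \<in> K"

definition convex_pointed_cone :: "(real^'m) set \<Rightarrow> bool" where
  "convex_pointed_cone K \<longleftrightarrow>
     (\<forall>x\<in>K. \<forall>c>0. c *\<^sub>R x \<in> K) \<and> convex K \<and> K \<inter> uminus ` K \<subseteq> {0}"

definition pareto_set :: "(real^'m) set \<Rightarrow> (real^'m) set" where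
  "pareto_set Y = {ys \<in> Y. \<not> (\<exists>y\<in>Y. vgeq y ys)}"

definition pareto_set_crit :: "('a \<Rightarrow> real^'m) \<Rightarrow> 'a set \<Rightarrow> 'a set" where
  "pareto_set_crit g X = {xs \<in> X. \<not> (\<exists>x\<in>X. vgeq (g x) (g xs))}"

definition codirectional :: "real^'m \<Rightarrow> real^'m \<Rightarrow> bool" where
  "codirectional a b \<longleftrightarrow> (\<exists>c>0. a = c *\<^sub>R b) \<or> (\<exists>c>0. b = c *\<^sub>R a)"

end

theory Submission
  imports Defs
begin

text \<open>Hence every \<open>f\<close>-improvement of an alternative is a \<open>g\<close>-improvement, and
  \<open>g\<close>-optimal alternatives are \<open>f\<close>-optimal.\<close>

lemma image_pareto_set_crit_subset:
  assumes "\<And>x xs. x \<in> X \<Longrightarrow> xs \<in> X \<Longrightarrow> vgeq (f x) (f xs) \<Longrightarrow> vgeq (g x) (g xs)"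
  shows "f ` pareto_set_crit g X \<subseteq> pareto_set (f ` X)"
  using assms unfolding pareto_set_crit_def pareto_set_def by blast

lemma vgeq_2_iff:
  fixes u v :: "real^2"
  shows "vgeq u v \<longleftrightarrow> u $ 1 \<ge> v $ 1 \<and> u $ 2 \<ge> v $ 2 \<and> (u $ 1 \<noteq> v $ 1 \<or> u $ 2 \<noteq> v $ 2)"
  unfolding vgeq_def by (auto simp: vec_eq_iff forall_2)

lemma vgeq_shear:
  fixes u v p q :: "real^2"
  assumes "a \<ge> 0" "b > 0"
    and "p $ 1 = u $ 1" "p $ 2 = a * u $ 1 + b * u $ 2"
    and "q $ 1 = v $ 1" "q $ 2 = a * v $ 1 + b * v $ 2"
    and "vgeq u v"
  shows "vgeq p q"
proof -
  have u: "v $ 1 \<le> u $ 1" "v $ 2 \<le> u $ 2" "u $ 1 \<noteq> v $ 1 \<or> u $ 2 \<noteq> v $ 2"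
    using \<open>vgeq u v\<close> by (auto simp: vgeq_2_iff)
  have "a * v $ 1 \<le> a * u $ 1" "b * v $ 2 \<le> b * u $ 2"
    using u assms(1,2) by (simp_all add: mult_left_mono)
  moreover have "u $ 1 = v $ 1 \<Longrightarrow> b * v $ 2 < b * u $ 2"
    using u assms(2) by simp
  ultimately show ?thesis
    using u assms(3-6) by (auto simp: vgeq_2_iff)
qed

lemma codirectional_if_det_eq_0:
  fixes y z :: "real^2"
  assumes "y $ 1 > 0" "z $ 1 > 0" "y $ 1 * z $ 2 = y $ 2 * z $ 1"
  shows "codirectional y z"
proof -
  have "y = (y $ 1 / z $ 1) *\<^sub>R z"
    using assms by (simp add: vec_eq_iff forall_2 field_simps)
  moreover have "y $ 1 / z $ 1 > 0"
    using assms by simp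
  ultimately show ?thesis
    unfolding codirectional_def by blast
qed

theorem theorem2:
  fixes X :: "(real^'k) set"
    and f g :: "real^'k \<Rightarrow> real^2"
    and K1 K2 K3 :: "(real^2) set"
    and y1 y2 y3 :: "real^2"
    and w11 w21 w12 w22 w13 w23 :: real
  assumes cones: "\<forall>K\<in>{K1, K2, K3}. convex_pointed_cone K \<and> nonneg_orthant \<subseteq> K \<and> 0 \<notin> K"
    and wpos: "w11 > 0" "w21 > 0" "w12 > 0" "w22 > 0" "w13 > 0" "w23 > 0"
    and y1: "y1 $ 1 = w11" "y1 $ 2 = - w21"
    and y2: "y2 $ 1 = w12" "y2 $ 2 = - w22"
    and y3: "y3 $ 1 = - w13" "y3 $ 2 = w23"
    and pref: "cone_rel K1 y1 0" "cone_rel K2 y2 0" "cone_rel K3 y3 0"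
    and ncod: "\<not> codirectional y1 y2"
    and g1: "\<forall>x\<in>X. g x $ 1 = f x $ 1"
    and gpos: "w11 * w22 - w21 * w12 > 0 \<Longrightarrow> \<forall>x\<in>X. g x $ 2 = w21 * f x $ 1 + w11 * f x $ 2"
    and gneg: "w11 * w22 - w21 * w12 < 0 \<Longrightarrow> \<forall>x\<in>X. g x $ 2 = w22 * f x $ 1 + w12 * f x $ 2"
  shows "f ` pareto_set_crit g X \<subseteq> pareto_set (f ` X)"
proof -
  have "w11 * w22 - w21 * w12 \<noteq> 0"
    using codirectional_if_det_eq_0[of y1 y2] ncod wpos y1 y2 by auto
  then obtain a b where ab: "a > 0" "b > 0" "\<forall>x\<in>X. g x $ 2 = a * f x $ 1 + b * f x $ 2"
    using gpos gneg wpos by (meson linorder_neqE_linordered_idom)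
  show ?thesis
  proof (rule image_pareto_set_crit_subset)
    fix x xs
    assume "x \<in> X" "xs \<in> X" "vgeq (f x) (f xs)"
    then show "vgeq (g x) (g xs)"
      using vgeq_shear[of a b "g x" "f x" "g xs" "f xs"] ab g1 by auto
  qed
qed

end
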